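(* Let $a,b,c,p\in\mathbb{C}$ with $-c\notin\mathbb{N}\cup\{0\}$. Suppose that \[ e^{pz}F(a,b;c;z)=\sum_{n=0}^\infty u_nz^n,\qquad |z|<1. \] Then $u_0=1$, $u_1=\frac{ab}{c}+p$, $u_2=\frac{a(1+a)b(1+b)}{2c(1+c)}+\frac{abp}{c}+\frac{p^2}{2}$, and for all integers $n\ge2$, \[ u_{n+1}=\frac{(a+n)(b+n)+p(c+2n)}{(n+1)(c+n)}u_n-\frac{p(a+b+2n+p-1)}{(n+1)(c+n)}u_{n-1}+\frac{p^2}{(n+1)(c+n)}u_{n-2}. \]
   Context: For $a\in\mathbb{C}$, $(a)_n=a(a+1)\cdots(a+n-1)$ denotes the Pochhammer symbol, with $(a)_0=1$. For $a,b,c\in\mathbb{C}$ with $-c\notin\mathbb{N}\cup\{0\}$, the Gaussian hypergeometric function is $F(a,b;c;z)=\sum_{n=0}^\infty \frac{(a)_n(b)_n}{(c)_n\,n!}z^n$, $|z|<1$. *)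

theory Defs
  imports "HOL-Analysis.Analysis"
begin

definition hyp2f1 :: "complex \<Rightarrow> complex \<Rightarrow> complex \<Rightarrow> complex \<Rightarrow> complex" where
  "hyp2f1 a b c z =
     (\<Sum>n. pochhammer a n * pochhammer b n / (pochhammer c n * fact n) * z ^ n)"

end

theory Submission
  imports Defs "HOL-Complex_Analysis.Laurent_Convergence"
begin

text \<open>Both \<open>\<Sum> u\<^sub>n z\<^sup>n\<close> and the hypergeometric series converge near 0, so by uniqueness of
  power series expansions the \<open>u\<^sub>n\<close> are the coefficients of \<open>e\<^sup>p\<^sup>z F\<close> as a formal power series.
  \<open>F\<close> is annihilated by the hypergeometric operator \<open>z(1 - z)D\<^sup>2 + (c - (a + b + 1)z)D - ab\<close>.
  Since \<open>D (e\<^sup>p\<^sup>z G) = e\<^sup>p\<^sup>z (D + p) G\<close>, the series \<open>e\<^sup>p\<^sup>z F\<close> is annihilated by the same operator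
  with \<open>D\<close> replaced by \<open>D - p\<close>; its coefficients are polynomials in \<open>z\<close> of degree at most 2,
  so comparing the coefficients of \<open>z\<^sup>n\<close> gives a recurrence of length three.\<close>

definition hyp2f1_fps :: "'a \<Rightarrow> 'a \<Rightarrow> 'a \<Rightarrow> 'a :: field_char_0 fps" where
  "hyp2f1_fps a b c = Abs_fps (\<lambda>n. pochhammer a n * pochhammer b n / (pochhammer c n * fact n))"

text \<open>The hypergeometric operator conjugated by \<open>e\<^sup>p\<^sup>z\<close>, i.e. with \<open>D\<close> replaced by \<open>D - p\<close>;
  \<open>hyp2f1_op 0\<close> is the hypergeometric operator itself.\<close>

definition hyp2f1_op :: "'a \<Rightarrow> 'a \<Rightarrow> 'a \<Rightarrow> 'a \<Rightarrow> 'a :: field_char_0 fps \<Rightarrow> 'a fps" where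
  "hyp2f1_op p a b c G =
     fps_X * (1 - fps_X) * (fps_deriv (fps_deriv G) - fps_const (2 * p) * fps_deriv G + fps_const (p\<^sup>2) * G)
     + (fps_const c - fps_const (a + b + 1) * fps_X) * (fps_deriv G - fps_const p * G)
     - fps_const (a * b) * G"

lemma hyp2f1_denominator_neq_0:
  fixes c :: "'a :: field_char_0"
  assumes "c \<notin> \<int>\<^sub>\<le>\<^sub>0"
  shows "(of_nat n + 1) * (c + of_nat n) \<noteq> 0"
proof -
  have "c + of_nat n \<noteq> 0"
    using assms by (metis add.commute add_eq_0_iff minus_of_nat_in_nonpos_Ints)
  moreover have "(of_nat n + 1 :: 'a) \<noteq> 0"
    using of_nat_neq_0[of n] by (simp add: add.commute)
  ultimately show ?thesis
    by simp
qed

lemma hyp2f1_fps_nth_Suc: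
  fixes a b c :: "'a :: field_char_0"
  assumes "c \<notin> \<int>\<^sub>\<le>\<^sub>0"
  shows "(of_nat n + 1) * (c + of_nat n) * fps_nth (hyp2f1_fps a b c) (Suc n)
           = (a + of_nat n) * (b + of_nat n) * fps_nth (hyp2f1_fps a b c) n"
proof -
  have "pochhammer c n \<noteq> 0"
    using assms by (auto simp: pochhammer_eq_0_iff)
  with hyp2f1_denominator_neq_0[OF assms, of n] show ?thesis
    by (simp add: hyp2f1_fps_def pochhammer_Suc divide_simps) (simp add: algebra_simps)
qed

lemma fps_nth_hyp2f1_op:
  assumes "n \<ge> 2"
  shows "fps_nth (hyp2f1_op p a b c G) n =
           (of_nat n + 1) * (c + of_nat n) * fps_nth G (n + 1)
           - ((a + of_nat n) * (b + of_nat n) + p * (c + 2 * of_nat n)) * fps_nth G n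
           + p * (a + b + 2 * of_nat n + p - 1) * fps_nth G (n - 1)
           - p\<^sup>2 * fps_nth G (n - 2)"
proof -
  obtain m where "n = Suc (Suc m)"
    using assms by (metis add_2_eq_Suc le_Suc_ex)
  then show ?thesis
    by (simp add: hyp2f1_op_def algebra_simps power2_eq_square)
qed

lemma fps_nth_hyp2f1_op_0:
  "fps_nth (hyp2f1_op 0 a b c G) n =
     (of_nat n + 1) * (c + of_nat n) * fps_nth G (n + 1) - (a + of_nat n) * (b + of_nat n) * fps_nth G n"
  by (cases n) (simp_all add: hyp2f1_op_def algebra_simps)

lemma hyp2f1_op_0_hyp2f1_fps:
  assumes "c \<notin> \<int>\<^sub>\<le>\<^sub>0"
  shows "hyp2f1_op 0 a b c (hyp2f1_fps a b c) = 0"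
  by (rule fps_ext) (simp add: fps_nth_hyp2f1_op_0 hyp2f1_fps_nth_Suc[OF assms])

lemma hyp2f1_op_fps_exp_mult:
  "hyp2f1_op p a b c (fps_exp p * F) = fps_exp p * hyp2f1_op 0 a b c F"
proof -
  have const_split: "fps_const (2 * p) = 2 * fps_const p" "fps_const (p\<^sup>2) = fps_const p ^ 2"
    by (simp_all add: numeral_fps_const)
  show ?thesis
    unfolding hyp2f1_op_def const_split
    by (simp only: fps_deriv_mult fps_exp_deriv fps_deriv_add fps_deriv_const
        mult_zero_right power_zero_numeral fps_const_0_eq_0) algebra
qed

lemma fps_nth_Suc_if_hyp2f1_op_eq_0:
  assumes "hyp2f1_op p a b c G = 0" and "c \<notin> \<int>\<^sub>\<le>\<^sub>0" and "n \<ge> 2"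
  shows "fps_nth G (n + 1) =
           ((a + of_nat n) * (b + of_nat n) + p * (c + 2 * of_nat n))
             / ((of_nat n + 1) * (c + of_nat n)) * fps_nth G n
           - p * (a + b + 2 * of_nat n + p - 1) / ((of_nat n + 1) * (c + of_nat n)) * fps_nth G (n - 1)
           + p ^ 2 / ((of_nat n + 1) * (c + of_nat n)) * fps_nth G (n - 2)"
proof -
  define d :: 'a where "d = (of_nat n + 1) * (c + of_nat n)"
  have "d \<noteq> 0"
    unfolding d_def using assms(2) by (rule hyp2f1_denominator_neq_0)
  have "fps_nth (hyp2f1_op p a b c G) n = 0"
    using assms(1) by simp
  then have "fps_nth G (n + 1) * d =
               ((a + of_nat n) * (b + of_nat n) + p * (c + 2 * of_nat n)) * fps_nth G n
               - p * (a + b + 2 * of_nat n + p - 1) * fps_nth G (n - 1)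
               + p ^ 2 * fps_nth G (n - 2)"
    unfolding fps_nth_hyp2f1_op[OF assms(3)] d_def by algebra
  with \<open>d \<noteq> 0\<close> have "fps_nth G (n + 1) =
               (((a + of_nat n) * (b + of_nat n) + p * (c + 2 * of_nat n)) * fps_nth G n
               - p * (a + b + 2 * of_nat n + p - 1) * fps_nth G (n - 1)
               + p ^ 2 * fps_nth G (n - 2)) / d"
    by (rule nonzero_eq_divide_eq[THEN iffD2])
  then show ?thesis
    unfolding d_def by (simp add: add_divide_distrib diff_divide_distrib ring_distribs)
qed

lemma conv_radius_pos_if_ratio_bounded:
  fixes f :: "nat \<Rightarrow> 'a :: {banach, real_normed_div_algebra}"
  assumes "K > 0" and "eventually (\<lambda>n. norm (f (Suc n)) \<le> K * norm (f n)) sequentially"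
  shows "conv_radius f > 0"
proof -
  obtain N where N: "\<And>n. n \<ge> N \<Longrightarrow> norm (f (Suc n)) \<le> K * norm (f n)"
    using assms(2) by (auto simp: eventually_sequentially)
  define z :: 'a where "z = of_real (1 / (2 * K))"
  have norm_z: "norm z = 1 / (2 * K)"
    using assms(1) unfolding z_def by (simp only: norm_of_real) simp
  then have Kz: "K * norm z = 1/2"
    using assms(1) by simp
  have "summable (\<lambda>n. f n * z ^ n)"
  proof (rule summable_ratio_test[of "1/2" N])
    fix n assume "n \<ge> N"
    have "norm (f (Suc n) * z ^ Suc n) = norm (f (Suc n)) * (norm z * norm z ^ n)"
      by (simp add: norm_mult norm_power)
    also have "\<dots> \<le> K * norm (f n) * (norm z * norm z ^ n)"
      using N[OF \<open>n \<ge> N\<close>] by (intro mult_right_mono) auto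
    also have "\<dots> = (K * norm z) * norm (f n * z ^ n)"
      by (simp add: norm_mult norm_power algebra_simps)
    finally show "norm (f (Suc n) * z ^ Suc n) \<le> 1/2 * norm (f n * z ^ n)"
      by (simp only: Kz)
  qed simp
  then have "conv_radius f \<ge> norm z"
    by (rule conv_radius_geI)
  moreover have "0 < ereal (norm z)"
    using assms(1) norm_z by simp
  ultimately show ?thesis
    by (rule order.strict_trans2[rotated])
qed

lemma LIMSEQ_plus_n_over_plus_n:
  fixes x y :: "'a :: real_normed_field"
  shows "(\<lambda>n. (x + of_nat n) / (y + of_nat n)) \<longlonglongrightarrow> 1"
proof -
  have "(\<lambda>n. (x / of_nat n + 1) / (y / of_nat n + 1)) \<longlonglongrightarrow> (0 + 1) / (0 + 1)"
    by (intro tendsto_intros) simp_all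
  moreover have "eventually (\<lambda>n. (x / of_nat n + 1) / (y / of_nat n + 1)
                   = (x + of_nat n) / (y + of_nat n)) sequentially"
    using eventually_gt_at_top[of 0]
    by eventually_elim (cases "y + of_nat n = 0"; simp add: divide_simps add_eq_0_iff)
  ultimately show ?thesis
    by (simp add: tendsto_cong)
qed

lemma fps_conv_radius_hyp2f1_fps_pos:
  fixes a b c :: "'a :: {real_normed_field, banach}"
  assumes "c \<notin> \<int>\<^sub>\<le>\<^sub>0"
  shows "fps_conv_radius (hyp2f1_fps a b c) > 0"
proof -
  let ?h = "fps_nth (hyp2f1_fps a b c)"
  let ?r = "\<lambda>n. (a + of_nat n) * (b + of_nat n) / ((of_nat n + 1) * (c + of_nat n))"
  have "?r = (\<lambda>n. (a + of_nat n) / (c + of_nat n) * ((b + of_nat n) / (1 + of_nat n)))"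
    by (simp add: ac_simps)
  then have "?r \<longlonglongrightarrow> 1 * 1"
    by (simp only:) (intro tendsto_mult LIMSEQ_plus_n_over_plus_n)
  from tendsto_norm[OF this] have "eventually (\<lambda>n. norm (?r n) < 2) sequentially"
    by (rule order_tendstoD) simp
  then have "eventually (\<lambda>n. norm (?h (Suc n)) \<le> 2 * norm (?h n)) sequentially"
  proof eventually_elim
    case (elim n)
    have "?h (Suc n) = ?r n * ?h n"
      using hyp2f1_fps_nth_Suc[OF assms, of n a b] hyp2f1_denominator_neq_0[OF assms, of n]
      by (simp add: field_simps)
    then have "norm (?h (Suc n)) = norm (?r n) * norm (?h n)"
      by (simp only: norm_mult)
    with elim show ?case
      by (metis less_imp_le mult_right_mono norm_ge_zero)
  qed
  then show ?thesis
    unfolding fps_conv_radius_def by (rule conv_radius_pos_if_ratio_bounded[rotated]) simp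
qed

lemma hyp2f1_has_fps_expansion:
  assumes "c \<notin> \<int>\<^sub>\<le>\<^sub>0"
  shows "hyp2f1 a b c has_fps_expansion hyp2f1_fps a b c"
proof -
  have "eval_fps (hyp2f1_fps a b c) has_fps_expansion hyp2f1_fps a b c"
    by (rule eval_fps_has_fps_expansion[OF fps_conv_radius_hyp2f1_fps_pos[OF assms]])
  moreover have "eval_fps (hyp2f1_fps a b c) = hyp2f1 a b c"
    by (simp add: fun_eq_iff eval_fps_def hyp2f1_def hyp2f1_fps_def)
  ultimately show ?thesis
    by simp
qed

lemma has_fps_expansion_if_sums:
  fixes u :: "nat \<Rightarrow> 'a :: {banach, real_normed_div_algebra}"
  assumes "r > 0" and "\<And>z. norm z < r \<Longrightarrow> (\<lambda>n. u n * z ^ n) sums f z"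
  shows "f has_fps_expansion Abs_fps u"
proof -
  have "fps_conv_radius (Abs_fps u) \<ge> r"
    unfolding fps_conv_radius_def
  proof (rule conv_radius_geI_ex')
    fix \<rho> :: real assume "0 < \<rho>" "ereal \<rho> < ereal r"
    then show "summable (\<lambda>n. fps_nth (Abs_fps u) n * of_real \<rho> ^ n)"
      using assms(2)[of "of_real \<rho>"] by (auto dest: sums_summable)
  qed
  moreover have "eventually (\<lambda>z. z \<in> ball 0 r) (nhds 0)"
    using assms(1) by (intro eventually_nhds_in_open) auto
  then have "eventually (\<lambda>z. eval_fps (Abs_fps u) z = f z) (nhds 0)"
    by eventually_elim (use assms(2) in \<open>auto simp: eval_fps_def sums_iff\<close>)
  moreover have "0 < ereal r"
    using assms(1) by simp
  ultimately show ?thesis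
    unfolding has_fps_expansion_def by (auto intro: order.strict_trans2[rotated])
qed

theorem theorem3p1:
  fixes a b c p :: complex and u :: "nat \<Rightarrow> complex"
  assumes c_ok: "\<forall>m::nat. c \<noteq> - of_nat m"
    and expand: "\<forall>z::complex. norm z < 1 \<longrightarrow>
                   (\<lambda>n. u n * z ^ n) sums (exp (p * z) * hyp2f1 a b c z)"
  shows "u 0 = 1 \<and>
         u 1 = a * b / c + p \<and>
         u 2 = a * (1 + a) * b * (1 + b) / (2 * c * (1 + c)) + a * b * p / c + p ^ 2 / 2 \<and>
         (\<forall>n::nat. n \<ge> 2 \<longrightarrow>
           u (n + 1) =
             ((a + of_nat n) * (b + of_nat n) + p * (c + 2 * of_nat n))
               / ((of_nat n + 1) * (c + of_nat n)) * u n
           - p * (a + b + 2 * of_nat n + p - 1) / ((of_nat n + 1) * (c + of_nat n)) * u (n - 1)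
           + p ^ 2 / ((of_nat n + 1) * (c + of_nat n)) * u (n - 2))"
proof -
  have c: "c \<notin> \<int>\<^sub>\<le>\<^sub>0"
    using c_ok by (auto elim: nonpos_Ints_cases')
  have "(\<lambda>z. exp (p * z) * hyp2f1 a b c z) has_fps_expansion Abs_fps u"
    using expand by (intro has_fps_expansion_if_sums[of 1]) auto
  moreover have "(\<lambda>z. exp (p * z) * hyp2f1 a b c z) has_fps_expansion fps_exp p * hyp2f1_fps a b c"
    by (intro has_fps_expansion_mult has_fps_expansion_exp hyp2f1_has_fps_expansion c)
  ultimately have U: "Abs_fps u = fps_exp p * hyp2f1_fps a b c"
    by (rule fps_expansion_unique_complex)
  have "c \<noteq> 0" "1 + c \<noteq> 0"
    using c_ok[rule_format, of 0] c_ok[rule_format, of 1] by (auto simp: add_eq_0_iff)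
  moreover have "u n = (\<Sum>i = 0..n. p ^ i / fact i * fps_nth (hyp2f1_fps a b c) (n - i))" for n
    using arg_cong[OF U, of "\<lambda>F. fps_nth F n"] by (simp add: fps_mult_nth)
  ultimately have initial: "u 0 = 1" "u 1 = a * b / c + p"
      "u 2 = a * (1 + a) * b * (1 + b) / (2 * c * (1 + c)) + a * b * p / c + p ^ 2 / 2"
    by (simp_all add: hyp2f1_fps_def field_simps numeral_2_eq_2 pochhammer_Suc power2_eq_square)
  have "hyp2f1_op p a b c (Abs_fps u) = 0"
    by (simp add: U hyp2f1_op_fps_exp_mult hyp2f1_op_0_hyp2f1_fps[OF c])
  from initial fps_nth_Suc_if_hyp2f1_op_eq_0[OF this c] show ?thesis
    by simp
qed

end
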